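(* For positive integers $a<b\le c$, the words in $\mathbb{P}^*$ that are Wilf equivalent to $bac$ are exactly $bac$ and $cab$.
   Context: $\mathbb{P}^*$ is the set of finite words over the positive integers (usual order). For $w=w_1\ldots w_n$, $\mathrm{wt}(w)=t^nx^{\sum_i w_i}$. For words $u,w$, $u\le w$ (generalized factor order) if there are $|u|$ consecutive letters of $w$ whose $i$-th letter is $\ge$ the $i$-th letter of $u$ for each $i$. $F(u;t,x)=\sum_{w\in\mathbb{P}^*,\,u\le w}\mathrm{wt}(w)$, and $u\backsim v$ (Wilf equivalence) iff $F(u;t,x)=F(v;t,x)$. *)

theory Defs
  imports Main
begin

definition pword :: "nat list \<Rightarrow> bool" where
  "pword w \<longleftrightarrow> (\<forall>x \<in> set w. 1 \<le> x)"

definition gfo :: "nat list \<Rightarrow> nat list \<Rightarrow> bool" where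
  "gfo u w \<longleftrightarrow> (\<exists>i. i + length u \<le> length w \<and> (\<forall>j < length u. u ! j \<le> w ! (i + j)))"

text \<open>The generating function F(u;t,x) = sum over w >= u of t^|w| x^(sum w), represented by
  its coefficient function: coefficient of t^n x^s is the number of words w in P* with
  length n and letter sum s such that u <= w (finitely many).\<close>
definition F :: "nat list \<Rightarrow> nat \<Rightarrow> nat \<Rightarrow> nat" where
  "F u n s = card {w. pword w \<and> length w = n \<and> sum_list w = s \<and> gfo u w}"

definition wilf_equiv :: "nat list \<Rightarrow> nat list \<Rightarrow> bool" where
  "wilf_equiv u v \<longleftrightarrow> F u = F v"

end

theory Submission
  imports Defs
begin

text \<open>
  Counting the words of length n and letter sum s that contain an occurrence
  of a positive word u in the generalized factor order is an inclusion-exclusion problem: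
  such a word dominates, letterwise, one of the paddings 1^i u 1^(n-|u|-i) of u, and the
  set of words dominating a fixed word L with sum s (a "box") is a translate of the weak
  compositions of s - sum L into |L| parts.  Intersections of boxes are boxes of letterwise
  maxima, so the coefficients F u n s for n = |u|, |u|+1, |u|+2 are signed sums of box counts,
  and a box count determines the sum of its base word.

  For u = [x,y,z] this yields four invariants of Wilf equivalence: x+y+z, and the sums of the
  letterwise maxima of overlapping paddings of length 4 and 5.  For bac with a < b <= c these
  invariants pin the word down to bac or cab (an arithmetic case analysis).  Conversely,
  reversal preserves F, which gives bac ~ cab.  Wilf equivalent words have equal length, which
  reduces the theorem to words of length 3.
\<close>

definition dominating :: "nat list \<Rightarrow> nat \<Rightarrow> nat list set" where
  "dominating L s = {w. list_all2 (\<le>) L w \<and> sum_list w = s}"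

definition weak_compositions :: "nat \<Rightarrow> nat \<Rightarrow> nat list set" where
  "weak_compositions n k = {d. length d = n \<and> sum_list d = k}"

definition dom_count :: "nat \<Rightarrow> nat \<Rightarrow> nat \<Rightarrow> nat" where
  "dom_count n m s = (if m \<le> s then card (weak_compositions n (s - m)) else 0)"

lemma finite_weak_compositions: "finite (weak_compositions n k)"
proof (rule finite_subset)
  show "weak_compositions n k \<subseteq> {d. set d \<subseteq> {0..k} \<and> length d = n}"
    using member_le_sum_list by (fastforce simp: weak_compositions_def)
  show "finite {d::nat list. set d \<subseteq> {0..k} \<and> length d = n}"
    by (rule finite_lists_length_eq) simp
qed

lemma weak_compositions_zero: "weak_compositions n 0 = {replicate n 0}"
  by (auto simp: weak_compositions_def sum_list_eq_0_iff intro: replicate_eqI)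

lemma sum_list_map2_plus:
  "length L = length d \<Longrightarrow> sum_list (map2 (+) L d) = sum_list L + sum_list (d::nat list)"
proof (induction L arbitrary: d)
  case (Cons a L) then show ?case by (cases d) auto
qed simp

lemma dominating_eq_image:
  "dominating L s = (if sum_list L \<le> s
     then map2 (+) L ` weak_compositions (length L) (s - sum_list L) else {})"
proof (cases "sum_list L \<le> s")
  case True
  have "w \<in> map2 (+) L ` weak_compositions (length L) (s - sum_list L)"
    if w: "w \<in> dominating L s" for w
  proof
    have le: "list_all2 (\<le>) L w" and sw: "sum_list w = s" using w by (auto simp: dominating_def)
    then have len: "length w = length L" by (simp add: list_all2_lengthD)
    show "w = map2 (+) L (map2 (-) w L)"
      using le len by (auto simp: list_all2_conv_all_nth intro!: nth_equalityI)
    then show "map2 (-) w L \<in> weak_compositions (length L) (s - sum_list L)"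
      using sum_list_map2_plus[of L "map2 (-) w L"] len sw by (simp add: weak_compositions_def)
  qed
  moreover have "map2 (+) L ` weak_compositions (length L) (s - sum_list L) \<subseteq> dominating L s"
    using True by (auto simp: dominating_def weak_compositions_def sum_list_map2_plus list_all2_conv_all_nth)
  ultimately show ?thesis using True by auto
next
  case False
  have "sum_list L \<le> sum_list w" if "list_all2 (\<le>) L w" for w
    using that by (induction rule: list_all2_induct) auto
  then show ?thesis using False by (auto simp: dominating_def)
qed

lemma finite_dominating: "finite (dominating L s)"
  by (simp add: dominating_eq_image finite_weak_compositions)

lemma card_dominating: "card (dominating L s) = dom_count (length L) (sum_list L) s"
proof -
  have "inj_on (map2 (+) L) (weak_compositions (length L) k)" for k
  proof (rule inj_onI)
    fix d d' assume d: "d \<in> weak_compositions (length L) k" and d': "d' \<in> weak_compositions (length L) k"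
      and eq: "map2 (+) L d = map2 (+) L d'"
    show "d = d'"
    proof (rule nth_equalityI)
      show "length d = length d'" using d d' by (simp add: weak_compositions_def)
      fix i assume "i < length d"
      then show "d ! i = d' ! i"
        using arg_cong[OF eq, of "\<lambda>w. w ! i"] d d' by (simp add: weak_compositions_def)
    qed
  qed
  then show ?thesis by (simp add: dominating_eq_image dom_count_def card_image)
qed

lemma dominating_Int:
  "length L = length L' \<Longrightarrow> dominating L s \<inter> dominating L' s = dominating (map2 max L L') s"
  by (auto simp: dominating_def list_all2_conv_all_nth)

lemma int_card_Un:
  "finite A \<Longrightarrow> finite B \<Longrightarrow> int (card (A \<union> B)) = int (card A) + int (card B) - int (card (A \<inter> B))"
  using card_Un_Int[of A B] by simp

lemma int_card_Un3:
  assumes "finite A" "finite B" "finite C"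
  shows "int (card (A \<union> B \<union> C)) = int (card A) + int (card B) + int (card C)
    - int (card (A \<inter> B)) - int (card (A \<inter> C)) - int (card (B \<inter> C)) + int (card (A \<inter> B \<inter> C))"
proof -
  have "(A \<union> B) \<inter> C = A \<inter> C \<union> B \<inter> C" and "(A \<inter> C) \<inter> (B \<inter> C) = A \<inter> B \<inter> C" by blast+
  then show ?thesis
    using int_card_Un[of "A \<union> B" C] int_card_Un[of A B] int_card_Un[of "A \<inter> C" "B \<inter> C"] assms by simp
qed

definition pad :: "nat \<Rightarrow> nat \<Rightarrow> nat list \<Rightarrow> nat list" where
  "pad n i u = replicate i 1 @ u @ replicate (n - length u - i) 1"

lemma nth_pad:
  assumes "i + length u \<le> n" "k < n"
  shows "pad n i u ! k = (if i \<le> k \<and> k < i + length u then u ! (k - i) else 1)"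
  using assms by (auto simp: pad_def nth_append)

lemma in_dominating_pad:
  assumes u: "pword u" and i: "i + length u \<le> n"
  shows "w \<in> dominating (pad n i u) s \<longleftrightarrow>
    pword w \<and> length w = n \<and> sum_list w = s \<and> (\<forall>j < length u. u ! j \<le> w ! (i + j))"
proof
  assume w: "w \<in> dominating (pad n i u) s"
  then have len: "length w = n" and le: "\<forall>k < n. pad n i u ! k \<le> w ! k" and sw: "sum_list w = s"
    using i by (auto simp: dominating_def list_all2_conv_all_nth pad_def)
  have "1 \<le> pad n i u ! k" if "k < n" for k
    using u i that by (auto simp: nth_pad pword_def)
  then have "pword w" using le len by (fastforce simp: pword_def in_set_conv_nth)
  moreover have "u ! j \<le> w ! (i + j)" if "j < length u" for j
    using le[rule_format, of "i + j"] i that by (simp add: nth_pad)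
  ultimately show "pword w \<and> length w = n \<and> sum_list w = s \<and> (\<forall>j < length u. u ! j \<le> w ! (i + j))"
    using len sw by blast
next
  assume w: "pword w \<and> length w = n \<and> sum_list w = s \<and> (\<forall>j < length u. u ! j \<le> w ! (i + j))"
  have "pad n i u ! k \<le> w ! k" if "k < n" for k
  proof (cases "i \<le> k \<and> k < i + length u")
    case True
    then show ?thesis using w i that nth_pad[OF i that] by (metis add_diff_inverse_nat not_le add_less_cancel_left)
  next
    case False
    then show ?thesis using w i that by (auto simp: nth_pad pword_def)
  qed
  then show "w \<in> dominating (pad n i u) s"
    using w i by (auto simp: dominating_def list_all2_conv_all_nth pad_def)
qed

lemma occurrences_eq_Union_dominating:
  assumes "pword u" "length u \<le> n"
  shows "{w. pword w \<and> length w = n \<and> sum_list w = s \<and> gfo u w}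
    = (\<Union>i \<le> n - length u. dominating (pad n i u) s)"
proof -
  have "i + length u \<le> n \<longleftrightarrow> i \<le> n - length u" for i using assms(2) by arith
  then show ?thesis using in_dominating_pad[OF assms(1)] by (auto simp: gfo_def)
qed

lemma F_via_dominating:
  assumes "pword u" "length u \<le> n"
  shows "F u n s = card (\<Union>i \<le> n - length u. dominating (pad n i u) s)"
  unfolding F_def occurrences_eq_Union_dominating[OF assms] ..

lemma card_dominating_eq:
  "length L = n \<Longrightarrow> sum_list L = m \<Longrightarrow> card (dominating L s) = dom_count n m s"
  by (simp add: card_dominating)

lemma F_length3:
  assumes "pword [x,y,z]"
  shows "F [x,y,z] 3 s = dom_count 3 (x + y + z) s"
  using assms by (simp add: F_via_dominating pad_def) (rule card_dominating_eq; simp)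

lemma F_length4:
  assumes "pword [x,y,z]"
  shows "int (F [x,y,z] 4 s)
    = 2 * int (dom_count 4 (x + y + z + 1) s) - int (dom_count 4 (x + max x y + max y z + z) s)"
proof -
  let ?D0 = "dominating [x,y,z,1] s" and ?D1 = "dominating [1,x,y,z] s"
  have pos: "1 \<le> x" "1 \<le> z" using assms by (auto simp: pword_def)
  have i01: "?D0 \<inter> ?D1 = dominating (map2 max [x,y,z,1] [1,x,y,z]) s"
    by (rule dominating_Int) simp
  have c0: "card ?D0 = dom_count 4 (x + y + z + 1) s"
    and c1: "card ?D1 = dom_count 4 (x + y + z + 1) s"
    and c01: "card (dominating (map2 max [x,y,z,1] [1,x,y,z]) s) = dom_count 4 (x + max x y + max y z + z) s"
    using pos by (auto intro!: card_dominating_eq simp: max_absorb1 max_absorb2 max.commute)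
  have "F [x,y,z] 4 s = card (?D0 \<union> ?D1)"
    using assms by (simp add: F_via_dominating atMost_Suc pad_def Un_commute)
  then have "int (F [x,y,z] 4 s) = int (card ?D0) + int (card ?D1) - int (card (?D0 \<inter> ?D1))"
    by (simp add: int_card_Un finite_dominating)
  also have "\<dots> = 2 * int (dom_count 4 (x + y + z + 1) s) - int (dom_count 4 (x + max x y + max y z + z) s)"
    unfolding i01 c0 c1 c01 by simp
  finally show ?thesis .
qed

lemma F_length5:
  assumes "pword [x,y,z]"
  shows "int (F [x,y,z] 5 s)
    = 3 * int (dom_count 5 (x + y + z + 2) s) - 2 * int (dom_count 5 (x + max x y + max y z + z + 1) s)
      - int (dom_count 5 (x + y + max x z + y + z) s)
      + int (dom_count 5 (x + max x y + max (max x y) z + max y z + z) s)"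
proof -
  let ?L0 = "[x,y,z,1,1]" and ?L1 = "[1,x,y,z,1]" and ?L2 = "[1,1,x,y,z]"
  let ?D0 = "dominating ?L0 s" and ?D1 = "dominating ?L1 s" and ?D2 = "dominating ?L2 s"
  have pos: "1 \<le> x" "1 \<le> y" "1 \<le> z" using assms by (auto simp: pword_def)
  have i01: "?D0 \<inter> ?D1 = dominating (map2 max ?L0 ?L1) s"
    and i02: "?D0 \<inter> ?D2 = dominating (map2 max ?L0 ?L2) s"
    and i12: "?D1 \<inter> ?D2 = dominating (map2 max ?L1 ?L2) s"
    by (rule dominating_Int; simp)+
  have i012: "dominating (map2 max ?L0 ?L1) s \<inter> ?D2 = dominating (map2 max (map2 max ?L0 ?L1) ?L2) s"
    by (rule dominating_Int) simp
  have c0: "card ?D0 = dom_count 5 (x + y + z + 2) s"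
    and c1: "card ?D1 = dom_count 5 (x + y + z + 2) s"
    and c2: "card ?D2 = dom_count 5 (x + y + z + 2) s"
    by (rule card_dominating_eq; simp)+
  have c01: "card (dominating (map2 max ?L0 ?L1) s) = dom_count 5 (x + max x y + max y z + z + 1) s"
    by (rule card_dominating_eq) (use pos in \<open>simp_all add: max_absorb1 max_absorb2 max.commute\<close>)
  have c12: "card (dominating (map2 max ?L1 ?L2) s) = dom_count 5 (x + max x y + max y z + z + 1) s"
    by (rule card_dominating_eq) (use pos in \<open>simp_all add: max_absorb1 max_absorb2 max.commute\<close>)
  have c02: "card (dominating (map2 max ?L0 ?L2) s) = dom_count 5 (x + y + max x z + y + z) s"
    by (rule card_dominating_eq) (use pos in \<open>simp_all add: max_absorb1 max_absorb2\<close>)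
  have c012: "card (dominating (map2 max (map2 max ?L0 ?L1) ?L2) s)
      = dom_count 5 (x + max x y + max (max x y) z + max y z + z) s"
    by (rule card_dominating_eq)
      (use pos in \<open>simp_all add: max_absorb1 max_absorb2 max.commute max.left_commute\<close>)
  have "F [x,y,z] 5 s = card (?D0 \<union> ?D1 \<union> ?D2)"
    using assms by (simp add: F_via_dominating atMost_Suc pad_def numeral_eq_Suc Un_ac)
  then have "int (F [x,y,z] 5 s) = int (card ?D0) + int (card ?D1) + int (card ?D2)
      - int (card (?D0 \<inter> ?D1)) - int (card (?D0 \<inter> ?D2)) - int (card (?D1 \<inter> ?D2))
      + int (card (?D0 \<inter> ?D1 \<inter> ?D2))"
    by (simp add: int_card_Un3 finite_dominating)
  also have "\<dots> = 3 * int (dom_count 5 (x + y + z + 2) s)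
      - 2 * int (dom_count 5 (x + max x y + max y z + z + 1) s)
      - int (dom_count 5 (x + y + max x z + y + z) s)
      + int (dom_count 5 (x + max x y + max (max x y) z + max y z + z) s)"
    unfolding i01 i02 i12 i012 c0 c1 c2 c01 c02 c12 c012 by simp
  finally show ?thesis .
qed

text \<open>A box count vanishes below the sum of its base and is 1 at that sum, so it determines this sum;
  likewise for a difference of two box counts whose bases are ordered.\<close>
lemma dom_count_below: "s < m \<Longrightarrow> dom_count n m s = 0"
  by (simp add: dom_count_def)

lemma dom_count_start: "dom_count n m m = 1"
  by (simp add: dom_count_def weak_compositions_zero)

lemma dom_count_inj:
  assumes "\<And>s. dom_count n m s = dom_count n m' s"
  shows "m = m'"
proof (rule ccontr)
  assume "m \<noteq> m'"
  then show False
    using assms[of "min m m'"] by (cases "m < m'") (auto simp: dom_count_below dom_count_start min_def)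
qed

lemma dom_count_diff_inj:
  assumes h: "\<And>s. int (dom_count n q s) - int (dom_count n p s) = int (dom_count n q' s) - int (dom_count n p' s)"
    and "p < q" and "p' \<le> q'"
  shows "p = p' \<and> q = q'"
proof -
  have "p = p'"
  proof (rule ccontr)
    assume "p \<noteq> p'"
    then consider "p' < p" | "p < p'" by linarith
    then show False
    proof cases
      case 1
      then have "q' = p'"
        using h[of p'] \<open>p < q\<close> \<open>p' \<le> q'\<close> by (cases "q' = p'") (auto simp: dom_count_below dom_count_start)
      then show False
        using h[of p] \<open>p < q\<close> by (simp add: dom_count_below dom_count_start)
    next
      case 2
      then show False
        using h[of p] \<open>p < q\<close> \<open>p' \<le> q'\<close> by (simp add: dom_count_below dom_count_start)
    qed
  qed
  moreover have "q = q'"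
    by (rule dom_count_inj[of n]) (use h \<open>p = p'\<close> in simp)
  ultimately show ?thesis by simp
qed

lemma gfo_rev:
  assumes "gfo u w"
  shows "gfo (rev u) (rev w)"
proof -
  obtain i where i: "i + length u \<le> length w" and dom: "\<forall>j < length u. u ! j \<le> w ! (i + j)"
    using assms by (auto simp: gfo_def)
  let ?i = "length w - length u - i"
  have "rev u ! j \<le> rev w ! (?i + j)" if j: "j < length u" for j
  proof -
    let ?k = "length u - Suc j"
    have "rev u ! j = u ! ?k" using j by (rule rev_nth)
    moreover have "rev w ! (?i + j) = w ! (length w - Suc (?i + j))" by (rule rev_nth) (use i j in arith)
    moreover have "length w - Suc (?i + j) = i + ?k" using i j by arith
    moreover have "?k < length u" using j by arith
    ultimately show ?thesis using dom by simp
  qed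
  then show ?thesis unfolding gfo_def by (intro exI[of _ ?i]) (use i in simp)
qed

lemma F_rev: "F (rev u) = F u"
proof (intro ext)
  fix n s
  let ?S = "\<lambda>u. {w. pword w \<and> length w = n \<and> sum_list w = s \<and> gfo u w}"
  have "?S (rev u) = rev ` ?S u"
  proof (intro equalityI subsetI)
    fix w assume w: "w \<in> ?S (rev u)"
    then have "gfo u (rev w)" using gfo_rev[of "rev u" w] by simp
    with w have "rev w \<in> ?S u" by (simp add: pword_def sum_list_rev)
    then show "w \<in> rev ` ?S u" by (rule rev_image_eqI) simp
  next
    fix w assume "w \<in> rev ` ?S u"
    then obtain v where v: "v \<in> ?S u" and "w = rev v" by blast
    then show "w \<in> ?S (rev u)" using gfo_rev[of u v] by (simp add: pword_def sum_list_rev)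
  qed
  moreover have "inj_on rev (?S u)" by (simp add: inj_on_def)
  ultimately show "F (rev u) n s = F u n s" unfolding F_def by (simp add: card_image)
qed

lemma F_below_length:
  assumes "n < length v"
  shows "F v n s = 0"
proof -
  have "{w. pword w \<and> length w = n \<and> sum_list w = s \<and> gfo v w} = {}"
    using assms by (auto simp: gfo_def)
  then show ?thesis unfolding F_def by (metis card.empty)
qed

lemma F_at_own_length: "pword v \<Longrightarrow> 0 < F v (length v) (sum_list v)"
proof -
  assume "pword v"
  let ?S = "{w. pword w \<and> length w = length v \<and> sum_list w = sum_list v \<and> gfo v w}"
  have "finite ?S"
    by (rule finite_subset[OF _ finite_weak_compositions]) (auto simp: weak_compositions_def)
  moreover have "v \<in> ?S" using \<open>pword v\<close> by (auto simp: gfo_def intro: exI[of _ 0])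
  ultimately show ?thesis unfolding F_def by (auto simp: card_gt_0_iff)
qed

lemma F_eq_length:
  assumes "pword u" "pword v" "F u = F v"
  shows "length u = length v"
proof (rule ccontr)
  assume "length u \<noteq> length v"
  then consider "length u < length v" | "length v < length u" by linarith
  then show False
  proof cases
    case 1
    then show False using F_at_own_length[OF assms(1)] F_below_length[of "length u" v] assms(3) by simp
  next
    case 2
    then show False using F_at_own_length[OF assms(2)] F_below_length[of "length v" u] assms(3) by simp
  qed
qed

text \<open>Four invariants of Wilf equivalence for three-letter words; the hypothesis on the middle letter
  makes the length-5 overlap statistics of the second word strictly ordered.\<close>
lemma F_eq_three_letter_stats:
  assumes p: "pword [x,y,z]" "pword [x',y',z']" and eq: "F [x,y,z] = F [x',y',z']"
    and middle: "y' < max x' z'"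
  shows "x + y + z = x' + y' + z'"
    and "x + max x y + max y z + z = x' + max x' y' + max y' z' + z'"
    and "x + y + max x z + y + z = x' + y' + max x' z' + y' + z'"
    and "x + max x y + max (max x y) z + max y z + z = x' + max x' y' + max (max x' y') z' + max y' z' + z'"
proof -
  have F_at: "F [x,y,z] n s = F [x',y',z'] n s" for n s using eq by simp
  show sum: "x + y + z = x' + y' + z'"
    by (rule dom_count_inj[of 3]) (use F_at[of 3] in \<open>simp add: F_length3 p\<close>)
  show ov: "x + max x y + max y z + z = x' + max x' y' + max y' z' + z'"
  proof (rule dom_count_inj[of 4])
    fix s show "dom_count 4 (x + max x y + max y z + z) s = dom_count 4 (x' + max x' y' + max y' z' + z') s"
      using F_at[of 4 s] F_length4[OF p(1), of s] F_length4[OF p(2), of s] sum by simp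
  qed
  have "x' + y' + max x' z' + y' + z' = x + y + max x z + y + z
      \<and> x' + max x' y' + max (max x' y') z' + max y' z' + z' = x + max x y + max (max x y) z + max y z + z"
  proof (rule dom_count_diff_inj[of 5])
    fix s
    show "int (dom_count 5 (x' + max x' y' + max (max x' y') z' + max y' z' + z') s)
            - int (dom_count 5 (x' + y' + max x' z' + y' + z') s)
          = int (dom_count 5 (x + max x y + max (max x y) z + max y z + z) s)
            - int (dom_count 5 (x + y + max x z + y + z) s)"
      using F_at[of 5 s] F_length5[OF p(1), of s] F_length5[OF p(2), of s] sum ov by simp
    show "x' + y' + max x' z' + y' + z' < x' + max x' y' + max (max x' y') z' + max y' z' + z'"
      using middle by (auto simp: max_def split: if_splits)
    show "x + y + max x z + y + z \<le> x + max x y + max (max x y) z + max y z + z"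
      by (simp add: max_def)
  qed
  then show "x + y + max x z + y + z = x' + y' + max x' z' + y' + z'"
    and "x + max x y + max (max x y) z + max y z + z = x' + max x' y' + max (max x' y') z' + max y' z' + z'"
    by simp_all
qed

lemma three_letter_stats_bac:
  fixes a b c x y z :: nat
  assumes "a < b" "b \<le> c"
    and "x + y + z = b + a + c"
    and "x + max x y + max y z + z = b + max b a + max a c + c"
    and "x + y + max x z + y + z = b + a + max b c + a + c"
    and "x + max x y + max (max x y) z + max y z + z = b + max b a + max (max b a) c + max a c + c"
  shows "[x,y,z] = [b,a,c] \<or> [x,y,z] = [c,a,b]"
  using assms by (auto simp: max_def split: if_splits)

theorem corollary6:
  fixes a b c :: nat
  assumes "1 \<le> a" and "a < b" and "b \<le> c"
  shows "{v. pword v \<and> wilf_equiv v [b, a, c]} = {[b, a, c], [c, a, b]}"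
proof (intro equalityI subsetI)
  have bac: "pword [b,a,c]" using assms by (simp add: pword_def)
  fix v assume "v \<in> {v. pword v \<and> wilf_equiv v [b, a, c]}"
  then have v: "pword v" and eq: "F v = F [b,a,c]" by (auto simp: wilf_equiv_def)
  have "length v = 3" using F_eq_length[OF v bac eq] by simp
  then obtain x y z where xyz: "v = [x,y,z]" by (auto simp: numeral_eq_Suc length_Suc_conv)
  have "a < max b c" using assms by simp
  note stats = F_eq_three_letter_stats[OF v[unfolded xyz] bac eq[unfolded xyz] this]
  show "v \<in> {[b, a, c], [c, a, b]}"
    using three_letter_stats_bac[OF assms(2,3) stats] xyz by auto
next
  fix v assume "v \<in> {[b, a, c], [c, a, b]}"
  moreover have "F [c,a,b] = F [b,a,c]" using F_rev[of "[b,a,c]"] by simp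
  ultimately show "v \<in> {v. pword v \<and> wilf_equiv v [b, a, c]}"
    using assms by (auto simp: wilf_equiv_def pword_def)
qed

end
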